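(* For all positive integers $n$ and all integers $m,k\ge 0$: $\Omega(n,k;m)\ge\Omega(n,k+1;m)$, $\Omega^*(n,k;m)\ge\Omega^*(n,k+1;m)$, and $\Omega^+(n,k;m)\ge\Omega^+(n,k+1;m)$.
   Context: Integers are written with $\bar i=-i$, totally ordered by $0<_{\mathbb Z}\bar1<_{\mathbb Z}1<_{\mathbb Z}\bar2<_{\mathbb Z}2<_{\mathbb Z}\cdots$, and $|\bar j|=j$. Write $a\prec_+ b$ if $a<_{\mathbb Z}b$ or $a=b\in\{0,1,2,\ldots\}$, and $a\prec_- b$ if $a<_{\mathbb Z}b$ or $a=b\in\{\bar1,\bar2,\ldots\}$. A permutation $\pi\in S_n$ is identified with the chain $\pi(1)<_\pi\cdots<_\pi\pi(n)$; a $\pi$-partition is a map $f:[n]\to\mathbb Z$ such that for each $1\le i<n$, $f(\pi(i))\prec_+ f(\pi(i+1))$ if $\pi(i)<\pi(i+1)$ and $f(\pi(i))\prec_- f(\pi(i+1))$ if $\pi(i)>\pi(i+1)$. $\Omega_\pi(m)$ counts $\pi$-partitions with $|f(i)|\le m$ for all $i$; $\Omega^*_\pi(m)$ counts those that additionally never take value $0$; $\Omega^+_\pi(m)$ counts those with all values in $\{1,\ldots,m\}$. Statistics: $\mathrm{des}(\pi)=|\{i: \pi(i)>\pi(i+1)\}|$; $\mathrm{pk}(\pi)=|\{2\le i\le n-1:\pi(i-1)<\pi(i)>\pi(i+1)\}|$; $\mathrm{lpk}(\pi)$ is the number of peaks of $\pi$ with the convention $\pi(0)=0$ (i.e. also counting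 $i=1$ if $\pi(1)>\pi(2)$). It is known that $\Omega_\pi(m)$ depends only on $n$ and $\mathrm{lpk}(\pi)$, $\Omega^*_\pi(m)$ only on $n$ and $\mathrm{pk}(\pi)$, and $\Omega^+_\pi(m)$ only on $n$ and $\mathrm{des}(\pi)$. Define $\Omega(n,k;m)=\Omega_\pi(m)$ for any $\pi\in S_n$ with $\mathrm{lpk}(\pi)=k$, $\Omega^*(n,k;m)=\Omega^*_\pi(m)$ for any $\pi$ with $\mathrm{pk}(\pi)=k$, $\Omega^+(n,k;m)=\Omega^+_\pi(m)$ for any $\pi$ with $\mathrm{des}(\pi)=k$, each defined to be $0$ if no such permutation exists. *)

theory Defs
  imports "HOL-Combinatorics.Permutations" "HOL-Library.FuncSet"
begin

text \<open>The total order 0 < -1 < 1 < -2 < 2 < ... on the integers, via a rank.\<close>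
definition zrank :: "int \<Rightarrow> int" where
  "zrank a = 2 * \<bar>a\<bar> - (if a < 0 then 1 else 0)"

definition zless :: "int \<Rightarrow> int \<Rightarrow> bool" where
  "zless a b \<longleftrightarrow> zrank a < zrank b"

definition prec_plus :: "int \<Rightarrow> int \<Rightarrow> bool" where
  "prec_plus a b \<longleftrightarrow> zless a b \<or> (a = b \<and> a \<ge> 0)"

definition prec_minus :: "int \<Rightarrow> int \<Rightarrow> bool" where
  "prec_minus a b \<longleftrightarrow> zless a b \<or> (a = b \<and> a < 0)"

text \<open>Permutations of [n] are functions \<pi> with \<pi> permutes {1..n}; \<pi> i is the i-th letter.\<close>
definition is_ppartition :: "nat \<Rightarrow> (nat \<Rightarrow> nat) \<Rightarrow> (nat \<Rightarrow> int) \<Rightarrow> bool" where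
  "is_ppartition n \<pi> f \<longleftrightarrow>
     (\<forall>i. 1 \<le> i \<and> i < n \<longrightarrow>
        (if \<pi> i < \<pi> (Suc i) then prec_plus (f (\<pi> i)) (f (\<pi> (Suc i)))
         else prec_minus (f (\<pi> i)) (f (\<pi> (Suc i)))))"

definition Omega_pi :: "nat \<Rightarrow> (nat \<Rightarrow> nat) \<Rightarrow> nat \<Rightarrow> nat" where
  "Omega_pi n \<pi> m = card {f \<in> {1..n} \<rightarrow>\<^sub>E {- int m..int m}. is_ppartition n \<pi> f}"

definition Omega_star_pi :: "nat \<Rightarrow> (nat \<Rightarrow> nat) \<Rightarrow> nat \<Rightarrow> nat" where
  "Omega_star_pi n \<pi> m = card {f \<in> {1..n} \<rightarrow>\<^sub>E ({- int m..int m} - {0}). is_ppartition n \<pi> f}"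

definition Omega_plus_pi :: "nat \<Rightarrow> (nat \<Rightarrow> nat) \<Rightarrow> nat \<Rightarrow> nat" where
  "Omega_plus_pi n \<pi> m = card {f \<in> {1..n} \<rightarrow>\<^sub>E {1..int m}. is_ppartition n \<pi> f}"

definition des :: "nat \<Rightarrow> (nat \<Rightarrow> nat) \<Rightarrow> nat" where
  "des n \<pi> = card {i. 1 \<le> i \<and> i < n \<and> \<pi> i > \<pi> (Suc i)}"

definition pk :: "nat \<Rightarrow> (nat \<Rightarrow> nat) \<Rightarrow> nat" where
  "pk n \<pi> = card {i. 2 \<le> i \<and> i < n \<and> \<pi> (i - 1) < \<pi> i \<and> \<pi> i > \<pi> (Suc i)}"

text \<open>Left peaks: convention \<pi>(0) = 0.\<close>
definition lpk :: "nat \<Rightarrow> (nat \<Rightarrow> nat) \<Rightarrow> nat" where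
  "lpk n \<pi> = card {i. 1 \<le> i \<and> i < n \<and>
      (if i = 1 then 0 else \<pi> (i - 1)) < \<pi> i \<and> \<pi> i > \<pi> (Suc i)}"

definition Omega :: "nat \<Rightarrow> nat \<Rightarrow> nat \<Rightarrow> nat" where
  "Omega n k m = (if \<exists>\<pi>. \<pi> permutes {1..n} \<and> lpk n \<pi> = k
     then Omega_pi n (SOME \<pi>. \<pi> permutes {1..n} \<and> lpk n \<pi> = k) m else 0)"

definition Omega_star :: "nat \<Rightarrow> nat \<Rightarrow> nat \<Rightarrow> nat" where
  "Omega_star n k m = (if \<exists>\<pi>. \<pi> permutes {1..n} \<and> pk n \<pi> = k
     then Omega_star_pi n (SOME \<pi>. \<pi> permutes {1..n} \<and> pk n \<pi> = k) m else 0)"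

definition Omega_plus :: "nat \<Rightarrow> nat \<Rightarrow> nat \<Rightarrow> nat" where
  "Omega_plus n k m = (if \<exists>\<pi>. \<pi> permutes {1..n} \<and> des n \<pi> = k
     then Omega_plus_pi n (SOME \<pi>. \<pi> permutes {1..n} \<and> des n \<pi> = k) m else 0)"

end

theory Submission
  imports Defs
begin

(* Reading a pi-partition f along pi, the sequence g = f o pi satisfies |g 1| <= ... <= |g n|,
   and the conditions between consecutive entries depend only on the ascent word of pi.
   Grouping the g by the increments d of their absolute values turns Omega_pi(m) into a sum,
   over bounded sequences d, of a weight depending only on the set of positions where d is
   positive: this set has to meet the pair {p - 1, p} of every (left) peak p of pi, since no sign
   pattern survives a peak inside a stretch of constant absolute value (for Omega^+ it has to
   contain every descent), and otherwise every such stretch of positive value admits exactly two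
   sign patterns.  A sum of this kind is invariant under permuting positions, and k disjoint
   pairs can be moved into any family of at least k disjoint pairs, so it decreases when the
   number of peaks grows.  Finally, if k + 1 peaks (descents) occur in S_n then so do k. *)

section \<open>Permutations and finite sets\<close>

lemma bij_betw_Collect:
  "bij_betw h S T \<Longrightarrow> bij_betw h {x \<in> S. P (h x)} {y \<in> T. P y}"
  unfolding bij_betw_def inj_on_def by auto

lemma bij_betw_PiE_permute:
  assumes "p permutes A"
  shows "bij_betw (\<lambda>f. restrict (f \<circ> p) A) (A \<rightarrow>\<^sub>E B) (A \<rightarrow>\<^sub>E B)"
proof (rule bij_betw_byWitness[where f' = "\<lambda>g. restrict (g \<circ> inv p) A"])
  have inv: "restrict (restrict (f \<circ> r) A \<circ> s) A = f"
    if "f \<in> A \<rightarrow>\<^sub>E B" "s permutes A" "\<And>x. r (s x) = x" for f r s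
  proof
    fix x
    show "restrict (restrict (f \<circ> r) A \<circ> s) A x = f x"
    proof (cases "x \<in> A")
      case True
      then show ?thesis
        using permutes_in_image[OF that(2)] by (simp add: that(3))
    next
      case False
      then show ?thesis
        using PiE_arb[OF that(1) False] by simp
    qed
  qed
  show "\<forall>f\<in>A \<rightarrow>\<^sub>E B. restrict (restrict (f \<circ> p) A \<circ> inv p) A = f"
    using inv[OF _ permutes_inv[OF assms] permutes_inverses(1)[OF assms]] by blast
  show "\<forall>g\<in>A \<rightarrow>\<^sub>E B. restrict (restrict (g \<circ> inv p) A \<circ> p) A = g"
    using inv[OF _ assms permutes_inverses(2)[OF assms]] by blast
  have "restrict (f \<circ> s) A \<in> A \<rightarrow>\<^sub>E B" if "f \<in> A \<rightarrow>\<^sub>E B" "s permutes A" for f s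
    using that permutes_in_image[OF that(2)] by (auto simp: PiE_iff)
  then show "(\<lambda>f. restrict (f \<circ> p) A) ` (A \<rightarrow>\<^sub>E B) \<subseteq> A \<rightarrow>\<^sub>E B"
    and "(\<lambda>g. restrict (g \<circ> inv p) A) ` (A \<rightarrow>\<^sub>E B) \<subseteq> A \<rightarrow>\<^sub>E B"
    using assms permutes_inv[OF assms] by blast+
qed

lemma card_eq_sum_card_fibres:
  assumes "finite A" "finite B" "f ` A \<subseteq> B"
  shows "card A = (\<Sum>b\<in>B. card {a \<in> A. f a = b})"
proof -
  have "A = (\<Union>b\<in>B. {a \<in> A. f a = b})"
    using assms(3) by auto
  moreover have "card (\<Union>b\<in>B. {a \<in> A. f a = b}) = (\<Sum>b\<in>B. card {a \<in> A. f a = b})"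
    by (rule card_UN_disjoint) (use assms(1,2) in auto)
  ultimately show ?thesis
    by simp
qed

lemma card_image_permutes: "\<tau> permutes Y \<Longrightarrow> card (\<tau> ` C) = card C"
  by (meson card_image inj_on_subset permutes_inj subset_UNIV)

lemma mem_image_permutes_not_in:
  assumes "\<tau> permutes Y" "a \<notin> Y"
  shows "a \<in> \<tau> ` C \<longleftrightarrow> a \<in> C"
proof -
  have "a \<in> \<tau> ` C \<longleftrightarrow> \<tau> a \<in> \<tau> ` C"
    using permutes_not_in[OF assms] by simp
  also have "\<dots> \<longleftrightarrow> a \<in> C"
    using permutes_inj[OF assms(1)] by (rule inj_image_mem_iff)
  finally show ?thesis .
qed

lemma image_permutes_disjoint:
  assumes "\<rho> permutes Y" "S \<inter> Y = {}"
  shows "\<rho> ` S = S"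
proof -
  have "\<rho> x = x" if "x \<in> S" for x
    using permutes_not_in[OF assms(1)] assms(2) that by blast
  then have "\<rho> ` S = (\<lambda>x. x) ` S"
    by (rule image_cong[OF refl])
  then show ?thesis
    by simp
qed

lemma involution_permutes:
  assumes "\<And>i. \<sigma> (\<sigma> i) = i" "\<And>i. i \<notin> A \<Longrightarrow> \<sigma> i = i"
  shows "\<sigma> permutes A"
  unfolding permutes_def
proof (intro conjI allI impI)
  fix x
  assume "x \<notin> A"
  then show "\<sigma> x = x"
    by (rule assms(2))
next
  fix y
  show "\<exists>!x. \<sigma> x = y"
    by (metis assms(1))
qed

lemma exists_permutes_image_eq:
  assumes "finite X" "A \<subseteq> X" "B \<subseteq> X" "card A = card B"
  shows "\<exists>\<rho>. \<rho> permutes X \<and> \<rho> ` A = B"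
proof -
  have fin: "finite A" "finite B" "finite (X - A)" "finite (X - B)"
    using assms(1-3) finite_subset by auto
  obtain f where f: "bij_betw f A B"
    using finite_same_card_bij[OF fin(1,2) assms(4)] by blast
  have "card (X - A) = card (X - B)"
    using assms by (simp add: card_Diff_subset fin)
  then obtain g where g: "bij_betw g (X - A) (X - B)"
    using finite_same_card_bij[OF fin(3,4)] by blast
  define \<rho> where "\<rho> x = (if x \<in> A then f x else if x \<in> X then g x else x)" for x
  have "bij_betw \<rho> A B"
    using f by (rule bij_betw_cong[THEN iffD1, rotated]) (simp add: \<rho>_def)
  moreover have "bij_betw \<rho> (X - A) (X - B)"
    using g by (rule bij_betw_cong[THEN iffD1, rotated]) (simp add: \<rho>_def)
  ultimately have "bij_betw \<rho> (A \<union> (X - A)) (B \<union> (X - B))"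
    by (rule bij_betw_combine) blast
  then have "bij_betw \<rho> X X"
    using assms(2,3) by (simp add: Un_absorb1 Un_Diff_cancel)
  then have "\<rho> permutes X"
    by (rule bij_imp_permutes) (use assms(2) in \<open>auto simp: \<rho>_def\<close>)
  moreover have "\<rho> ` A = B"
    using \<open>bij_betw \<rho> A B\<close> by (simp add: bij_betw_def)
  ultimately show ?thesis
    by blast
qed

lemma exists_permutes_image_eq_fixing:
  assumes "finite X" "A \<subseteq> X" "B \<subseteq> X" "card A = card B" "\<forall>S\<in>F. S \<inter> (A \<union> B) = {}"
  shows "\<exists>\<rho>. \<rho> permutes X \<and> \<rho> ` A = B \<and> (\<forall>S\<in>F. \<rho> ` S = S)"
proof -
  have "finite (A \<union> B)"
    using assms(1-3) by (simp add: finite_subset)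
  then obtain \<rho> where \<rho>: "\<rho> permutes (A \<union> B)" "\<rho> ` A = B"
    using exists_permutes_image_eq[of "A \<union> B" A B] assms(4) by blast
  have "\<rho> permutes X"
    using assms(2,3) by (intro permutes_subset[OF \<rho>(1)]) blast
  moreover have "\<forall>S\<in>F. \<rho> ` S = S"
    using assms(5) by (simp add: image_permutes_disjoint[OF \<rho>(1)])
  ultimately show ?thesis
    using \<rho>(2) by (intro exI[of _ \<rho>] conjI)
qed

lemma exists_unused_block:
  assumes "finite F" "inj \<tau>" "card F < card G" "pairwise disjnt G" "\<forall>S\<in>F. \<exists>T\<in>G. \<tau> ` T = S"
  shows "\<exists>T0\<in>G. \<forall>S\<in>F. S \<inter> \<tau> ` T0 = {}"
proof -
  have "card {T \<in> G. \<tau> ` T \<in> F} \<le> card F"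
    by (rule card_inj_on_le[of "image \<tau>"]) (use assms(1,2) in \<open>auto simp: inj_on_def inj_image_eq_iff\<close>)
  then obtain T0 where T0: "T0 \<in> G" "\<tau> ` T0 \<notin> F"
    using assms(3) by (metis (mono_tags, lifting) mem_Collect_eq not_le subsetI subset_antisym)
  have "S \<inter> \<tau> ` T0 = {}" if S: "S \<in> F" for S
  proof -
    obtain T where T: "T \<in> G" "\<tau> ` T = S"
      using assms(5) S by blast
    then have "T \<noteq> T0"
      using T0(2) S by auto
    then have "T \<inter> T0 = {}"
      using assms(4) T(1) T0(1) unfolding pairwise_def disjnt_def by blast
    then show ?thesis
      using T(2) assms(2) by (metis image_Int image_empty)
  qed
  then show ?thesis
    using T0(1) by blast
qed

lemma exists_permutes_blocks:
  assumes "finite X" "F \<subseteq> Pow X" "G \<subseteq> Pow X" "pairwise disjnt F" "pairwise disjnt G"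
    "\<forall>S\<in>F. card S = k" "\<forall>T\<in>G. card T = k" "card F \<le> card G"
  shows "\<exists>\<tau>. \<tau> permutes X \<and> (\<forall>S\<in>F. \<exists>T\<in>G. \<tau> ` T = S)"
proof -
  have "finite F"
    using assms(1,2) by (meson finite_Pow_iff finite_subset)
  then show ?thesis
    using assms(2,4,6,8)
  proof (induction F rule: finite_induct)
    case empty
    show ?case
      using permutes_id by blast
  next
    case (insert S F)
    have "F \<subseteq> Pow X" "pairwise disjnt F" "\<forall>S\<in>F. card S = k" "card F \<le> card G"
      using insert.prems insert.hyps by (auto simp: pairwise_insert)
    then obtain \<tau> where \<tau>: "\<tau> permutes X" "\<forall>S'\<in>F. \<exists>T\<in>G. \<tau> ` T = S'"
      using insert.IH by blast
    have inj: "inj \<tau>"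
      using \<tau>(1) by (rule permutes_inj)
    have "card F < card G"
      using insert.prems(4) insert.hyps by simp
    then obtain T0 where T0: "T0 \<in> G" "\<forall>S'\<in>F. S' \<inter> \<tau> ` T0 = {}"
      using exists_unused_block[OF insert.hyps(1) inj _ assms(5) \<tau>(2)] by blast
    have sub: "\<tau> ` T0 \<subseteq> X" "S \<subseteq> X"
      using T0(1) assms(3) insert.prems(1) permutes_image[OF \<tau>(1)] by auto
    have card_eq: "card (\<tau> ` T0) = card S"
      using T0(1) assms(7) insert.prems(3) inj by (simp add: card_image inj_on_subset)
    have "\<forall>S'\<in>F. S' \<inter> (\<tau> ` T0 \<union> S) = {}"
    proof
      fix S'
      assume "S' \<in> F"
      then have "S' \<inter> S = {}"
        using insert.prems(2) insert.hyps(2) by (metis disjnt_def insertCI pairwise_def)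
      then show "S' \<inter> (\<tau> ` T0 \<union> S) = {}"
        using T0(2) \<open>S' \<in> F\<close> by blast
    qed
    then obtain \<rho> where \<rho>: "\<rho> permutes X" "\<rho> ` \<tau> ` T0 = S" "\<forall>S'\<in>F. \<rho> ` S' = S'"
      using exists_permutes_image_eq_fixing[OF assms(1) sub card_eq] by blast
    have "(\<rho> \<circ> \<tau>) ` T0 = S"
      using \<rho>(2) by (simp add: image_comp)
    moreover have "\<exists>T\<in>G. (\<rho> \<circ> \<tau>) ` T = S'" if "S' \<in> F" for S'
      using \<tau>(2) \<rho>(3) that by (metis image_comp)
    ultimately have "\<forall>S'\<in>insert S F. \<exists>T\<in>G. (\<rho> \<circ> \<tau>) ` T = S'"
      using T0(1) by blast
    then show ?case
      using permutes_compose[OF \<tau>(1) \<rho>(1)] by blast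
  qed
qed

definition hits :: "'a set set \<Rightarrow> 'a set \<Rightarrow> bool" where
  "hits F C \<longleftrightarrow> (\<forall>T\<in>F. T \<inter> C \<noteq> {})"

lemma hits_image:
  assumes "\<forall>S\<in>F. \<exists>T\<in>G. \<tau> ` T = S" "hits G C"
  shows "hits F (\<tau> ` C)"
  unfolding hits_def
proof
  fix S
  assume "S \<in> F"
  then obtain T where "T \<in> G" "\<tau> ` T = S"
    using assms(1) by blast
  moreover obtain x where "x \<in> T" "x \<in> C"
    using assms(2) \<open>T \<in> G\<close> unfolding hits_def by blast
  ultimately show "S \<inter> \<tau> ` C \<noteq> {}"
    by blast
qed

lemma count_at_SOME_antimono:
  fixes c s :: "'a \<Rightarrow> nat"
  assumes "\<And>x y. P x \<Longrightarrow> P y \<Longrightarrow> s x \<le> s y \<Longrightarrow> c y \<le> c x"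
    and "\<exists>x. P x \<and> s x = k + 1 \<Longrightarrow> \<exists>x. P x \<and> s x = k"
  shows "(if \<exists>x. P x \<and> s x = k + 1 then c (SOME x. P x \<and> s x = k + 1) else 0)
    \<le> (if \<exists>x. P x \<and> s x = k then c (SOME x. P x \<and> s x = k) else 0)"
proof (cases "\<exists>x. P x \<and> s x = k + 1")
  case True
  then have "\<exists>x. P x \<and> s x = k"
    by (rule assms(2))
  then have "c (SOME x. P x \<and> s x = k + 1) \<le> c (SOME x. P x \<and> s x = k)"
    using someI_ex[OF True] someI_ex[OF \<open>\<exists>x. P x \<and> s x = k\<close>] by (intro assms(1)) simp_all
  then show ?thesis
    using True \<open>\<exists>x. P x \<and> s x = k\<close> by simp
qed auto

section \<open>Up-down words\<close>

definition upart_step :: "(nat \<Rightarrow> bool) \<Rightarrow> nat \<Rightarrow> int \<Rightarrow> int \<Rightarrow> bool" where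
  "upart_step u i a b \<longleftrightarrow> (if u i then prec_plus a b else prec_minus a b)"

lemma upart_step_abs_le: "upart_step u i a b \<Longrightarrow> \<bar>a\<bar> \<le> \<bar>b\<bar>"
  unfolding upart_step_def prec_plus_def prec_minus_def zless_def zrank_def
  by (auto split: if_splits)

lemma upart_step_if_abs_less: "\<bar>a\<bar> < \<bar>b\<bar> \<Longrightarrow> upart_step u i a b"
  unfolding upart_step_def prec_plus_def prec_minus_def zless_def zrank_def by auto

lemma upart_step_same_abs:
  "\<bar>a\<bar> = \<bar>b\<bar> \<Longrightarrow> upart_step u i a b \<longleftrightarrow> (a < 0 \<and> 0 < b) \<or> (a = b \<and> (u i \<longleftrightarrow> 0 \<le> a))"
  unfolding upart_step_def prec_plus_def prec_minus_def zless_def zrank_def by auto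

definition is_upart :: "nat \<Rightarrow> (nat \<Rightarrow> bool) \<Rightarrow> (nat \<Rightarrow> int) \<Rightarrow> bool" where
  "is_upart n u g \<longleftrightarrow> (\<forall>i. 1 \<le> i \<and> i < n \<longrightarrow> upart_step u i (g i) (g (Suc i)))"

definition uparts :: "nat \<Rightarrow> (nat \<Rightarrow> bool) \<Rightarrow> int set \<Rightarrow> (nat \<Rightarrow> int) set" where
  "uparts n u V = {g \<in> {1..n} \<rightarrow>\<^sub>E V. is_upart n u g}"

lemma is_upart_cong:
  "(\<And>i. 1 \<le> i \<Longrightarrow> i \<le> n \<Longrightarrow> g i = h i) \<Longrightarrow> is_upart n u g \<longleftrightarrow> is_upart n u h"
  unfolding is_upart_def by auto

lemma is_upart_Suc:
  "is_upart (Suc n) u g \<longleftrightarrow> is_upart n u g \<and> (1 \<le> n \<longrightarrow> upart_step u n (g n) (g (Suc n)))"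
  unfolding is_upart_def by (auto simp: less_Suc_eq)

lemma finite_uparts: "finite V \<Longrightarrow> finite (uparts n u V)"
  by (rule finite_subset[of _ "{1..n} \<rightarrow>\<^sub>E V"]) (auto simp: uparts_def finite_PiE)

definition ascent :: "(nat \<Rightarrow> nat) \<Rightarrow> nat \<Rightarrow> bool" where
  "ascent \<pi> i \<longleftrightarrow> \<pi> i < \<pi> (Suc i)"

lemma is_ppartition_iff_upart: "is_ppartition n \<pi> f \<longleftrightarrow> is_upart n (ascent \<pi>) (f \<circ> \<pi>)"
  unfolding is_ppartition_def is_upart_def upart_step_def ascent_def by simp

lemma card_ppartitions_eq_card_uparts:
  assumes "\<pi> permutes {1..n}"
  shows "card {f \<in> {1..n} \<rightarrow>\<^sub>E V. is_ppartition n \<pi> f} = card (uparts n (ascent \<pi>) V)"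
proof -
  have "is_ppartition n \<pi> f \<longleftrightarrow> is_upart n (ascent \<pi>) (restrict (f \<circ> \<pi>) {1..n})" for f
    unfolding is_ppartition_iff_upart by (rule is_upart_cong) auto
  then show ?thesis
    using bij_betw_same_card[OF bij_betw_Collect[OF bij_betw_PiE_permute[OF assms],
          where P = "is_upart n (ascent \<pi>)"]]
    unfolding uparts_def by simp
qed

definition descents :: "nat \<Rightarrow> (nat \<Rightarrow> bool) \<Rightarrow> nat set" where
  "descents n u = {i. 1 \<le> i \<and> i < n \<and> \<not> u i}"

definition peaks :: "nat \<Rightarrow> (nat \<Rightarrow> bool) \<Rightarrow> nat set" where
  "peaks n u = {p. 2 \<le> p \<and> p < n \<and> u (p - 1) \<and> \<not> u p}"

definition left_peaks :: "nat \<Rightarrow> (nat \<Rightarrow> bool) \<Rightarrow> nat set" where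
  "left_peaks n u = {p. 1 \<le> p \<and> p < n \<and> u (p - 1) \<and> \<not> u p}"

lemma not_ascent_iff:
  assumes "\<pi> permutes {1..n}"
  shows "\<not> ascent \<pi> i \<longleftrightarrow> \<pi> (Suc i) < \<pi> i"
proof -
  have "\<pi> i \<noteq> \<pi> (Suc i)"
    using permutes_inj[OF assms] by (metis injD n_not_Suc_n)
  then show ?thesis
    by (auto simp: ascent_def)
qed

lemma des_eq_card_descents:
  assumes "\<pi> permutes {1..n}"
  shows "des n \<pi> = card (descents n (ascent \<pi>))"
  unfolding des_def descents_def not_ascent_iff[OF assms] ..

lemma pk_eq_card_peaks:
  assumes "\<pi> permutes {1..n}"
  shows "pk n \<pi> = card (peaks n (ascent \<pi>))"
proof -
  have "{i. 2 \<le> i \<and> i < n \<and> \<pi> (i - 1) < \<pi> i \<and> \<pi> (Suc i) < \<pi> i} = peaks n (ascent \<pi>)"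
    unfolding peaks_def not_ascent_iff[OF assms] by (auto simp: ascent_def)
  then show ?thesis
    by (simp add: pk_def)
qed

lemma lpk_eq_card_left_peaks:
  assumes "\<pi> permutes {1..n}"
  shows "lpk n \<pi> = card (left_peaks n (ascent \<pi>))"
proof -
  have "\<pi> 0 = 0"
    using assms by (simp add: permutes_not_in)
  then have "{i. 1 \<le> i \<and> i < n \<and> (if i = 1 then 0 else \<pi> (i - 1)) < \<pi> i \<and> \<pi> (Suc i) < \<pi> i}
      = left_peaks n (ascent \<pi>)"
    unfolding left_peaks_def not_ascent_iff[OF assms] by (auto simp: ascent_def)
  then show ?thesis
    by (simp add: lpk_def)
qed

(* The convention pi(0) = 0 of left peaks: position 0 always counts as an ascent. *)
lemma ascent_0:
  assumes "\<pi> permutes {1..n}" "1 \<le> n"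
  shows "ascent \<pi> 0"
  using assms permutes_in_image[OF assms(1), of 1] by (simp add: ascent_def permutes_not_in)

lemma peaks_subset_left_peaks: "peaks n u \<subseteq> left_peaks n u"
  by (auto simp: peaks_def left_peaks_def)

lemma peaks_eq_left_peaks_minus_1: "peaks n u = left_peaks n u - {1}"
  by (auto simp: peaks_def left_peaks_def)

lemma left_peaks_eq_descents:
  assumes "u 0" "\<And>i. i \<in> descents n u \<Longrightarrow> Suc i \<notin> descents n u"
  shows "left_peaks n u = descents n u"
proof
  show "left_peaks n u \<subseteq> descents n u"
    by (auto simp: left_peaks_def descents_def)
  show "descents n u \<subseteq> left_peaks n u"
  proof
    fix p
    assume p: "p \<in> descents n u"
    have "u (p - 1)"
    proof (cases "p = 1")
      case False
      then have "Suc (p - 1) = p" "1 \<le> p - 1" "p - 1 < n"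
        using p by (auto simp: descents_def)
      then show ?thesis
        using assms(2)[of "p - 1"] p by (auto simp: descents_def)
    qed (simp add: assms(1))
    then show "p \<in> left_peaks n u"
      using p by (simp add: descents_def left_peaks_def)
  qed
qed

section \<open>Signs over a fixed sequence of absolute values\<close>

definition uparts_abs :: "nat \<Rightarrow> (nat \<Rightarrow> bool) \<Rightarrow> int set \<Rightarrow> (nat \<Rightarrow> nat) \<Rightarrow> (nat \<Rightarrow> int) set" where
  "uparts_abs n u V q = {g \<in> uparts n u V. \<forall>i\<in>{1..n}. \<bar>g i\<bar> = int (q i)}"

lemma abs_eq_int_iff: "\<bar>v :: int\<bar> = int k \<longleftrightarrow> v = int k \<or> v = - int k"
  by auto

lemma finite_abs_eq_int: "finite {v :: int. \<bar>v\<bar> = int k \<and> R v}"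
  by (rule finite_subset[of _ "{int k, - int k}"]) (auto simp: abs_eq_int_iff)

lemma finite_uparts_abs: "finite (uparts_abs n u V q)"
proof (rule finite_subset)
  show "uparts_abs n u V q \<subseteq> {1..n} \<rightarrow>\<^sub>E (\<Union>i\<in>{1..n}. {- int (q i), int (q i)})"
  proof
    fix g
    assume g: "g \<in> uparts_abs n u V q"
    then have "g \<in> {1..n} \<rightarrow>\<^sub>E UNIV" "\<forall>i\<in>{1..n}. \<bar>g i\<bar> = int (q i)"
      by (auto simp: uparts_abs_def uparts_def)
    then show "g \<in> {1..n} \<rightarrow>\<^sub>E (\<Union>i\<in>{1..n}. {- int (q i), int (q i)})"
      unfolding PiE_iff by (metis (no_types, lifting) UN_iff abs_eq_int_iff insert_iff)
  qed
  show "finite ({1..n} \<rightarrow>\<^sub>E (\<Union>i\<in>{1..n}. {- int (q i), int (q i)}))"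
    by (intro finite_PiE) auto
qed

lemma uparts_abs_0: "uparts_abs 0 u V q = {\<lambda>_. undefined}"
  by (simp add: uparts_abs_def uparts_def is_upart_def)

lemma uparts_abs_Suc_iff:
  "g \<in> uparts_abs (Suc n) u UNIV q \<longleftrightarrow>
    g(Suc n := undefined) \<in> uparts_abs n u UNIV q \<and> \<bar>g (Suc n)\<bar> = int (q (Suc n)) \<and>
    (1 \<le> n \<longrightarrow> upart_step u n (g n) (g (Suc n)))"
proof -
  have dom: "{1..Suc n} = insert (Suc n) {1..n}"
    by auto
  have "g \<in> {1..Suc n} \<rightarrow>\<^sub>E UNIV \<longleftrightarrow> g(Suc n := undefined) \<in> {1..n} \<rightarrow>\<^sub>E UNIV"
    unfolding dom PiE_iff extensional_def by auto
  moreover have "is_upart n u (g(Suc n := undefined)) \<longleftrightarrow> is_upart n u g"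
    by (rule is_upart_cong) auto
  ultimately show ?thesis
    unfolding uparts_abs_def uparts_def is_upart_Suc dom by auto
qed

lemma card_uparts_abs_Suc:
  "card {g \<in> uparts_abs (Suc n) u UNIV q. P (g (Suc n))} =
    (\<Sum>g\<in>uparts_abs n u UNIV q.
      card {v. \<bar>v\<bar> = int (q (Suc n)) \<and> (1 \<le> n \<longrightarrow> upart_step u n (g n) v) \<and> P v})"
proof -
  let ?W = "uparts_abs n u UNIV q"
  let ?W' = "{g \<in> uparts_abs (Suc n) u UNIV q. P (g (Suc n))}"
  let ?ext = "\<lambda>g. {v. \<bar>v\<bar> = int (q (Suc n)) \<and> (1 \<le> n \<longrightarrow> upart_step u n (g n) v) \<and> P v}"
  have restore: "g(Suc n := undefined) = g" if "g \<in> ?W" for g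
    using that PiE_arb[of g "{1..n}" "\<lambda>_. UNIV" "Suc n"] by (auto simp: uparts_abs_def uparts_def)
  have "bij_betw (\<lambda>(g, v). g(Suc n := v)) (Sigma ?W ?ext) ?W'"
  proof (rule bij_betw_byWitness[where f' = "\<lambda>g. (g(Suc n := undefined), g (Suc n))"])
    show "\<forall>x\<in>Sigma ?W ?ext. (\<lambda>g. (g(Suc n := undefined), g (Suc n))) ((\<lambda>(g, v). g(Suc n := v)) x) = x"
      using restore by auto
    show "(\<lambda>(g, v). g(Suc n := v)) ` Sigma ?W ?ext \<subseteq> ?W'"
    proof
      fix x
      assume "x \<in> (\<lambda>(g, v). g(Suc n := v)) ` Sigma ?W ?ext"
      then obtain g v where "g \<in> ?W" "v \<in> ?ext g" "x = g(Suc n := v)"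
        by auto
      then show "x \<in> ?W'"
        using uparts_abs_Suc_iff[of x] restore[of g] by simp
    qed
    show "(\<lambda>g. (g(Suc n := undefined), g (Suc n))) ` ?W' \<subseteq> Sigma ?W ?ext"
      using uparts_abs_Suc_iff by auto
  qed simp
  then have "card ?W' = card (Sigma ?W ?ext)"
    by (simp add: bij_betw_same_card)
  also have "\<dots> = (\<Sum>g\<in>?W. card (?ext g))"
    by (rule card_SigmaI) (simp_all add: finite_uparts_abs finite_abs_eq_int)
  finally show ?thesis .
qed

definition neg_count :: "nat \<Rightarrow> (nat \<Rightarrow> bool) \<Rightarrow> (nat \<Rightarrow> nat) \<Rightarrow> nat" where
  "neg_count n u q = card {g \<in> uparts_abs n u UNIV q. g n < 0}"

definition pos_count :: "nat \<Rightarrow> (nat \<Rightarrow> bool) \<Rightarrow> (nat \<Rightarrow> nat) \<Rightarrow> nat" where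
  "pos_count n u q = card {g \<in> uparts_abs n u UNIV q. 0 \<le> g n}"

lemma sum_uparts_abs_last:
  assumes "1 \<le> n"
  shows "(\<Sum>g\<in>uparts_abs n u UNIV q. K (g n)) =
    neg_count n u q * K (- int (q n)) + pos_count n u q * K (int (q n))"
proof -
  let ?W = "uparts_abs n u UNIV q"
  have "K (g n) = (if g n < 0 then K (- int (q n)) else K (int (q n)))" if "g \<in> ?W" for g
  proof -
    have "\<bar>g n\<bar> = int (q n)"
      using that assms by (simp add: uparts_abs_def)
    then show ?thesis
      by (auto simp: abs_eq_int_iff)
  qed
  then have "(\<Sum>g\<in>?W. K (g n)) = (\<Sum>g\<in>?W. if g n < 0 then K (- int (q n)) else K (int (q n)))"
    by (rule sum.cong[OF refl])
  also have "\<dots> = card (?W \<inter> {g. g n < 0}) * K (- int (q n)) + card (?W \<inter> - {g. g n < 0}) * K (int (q n))"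
    by (simp add: sum.If_cases finite_uparts_abs)
  also have "\<dots> = neg_count n u q * K (- int (q n)) + pos_count n u q * K (int (q n))"
  proof -
    have "?W \<inter> {g. g n < 0} = {g \<in> ?W. g n < 0}" "?W \<inter> - {g. g n < 0} = {g \<in> ?W. 0 \<le> g n}"
      by auto
    then show ?thesis
      by (simp only: neg_count_def pos_count_def)
  qed
  finally show ?thesis .
qed

lemma card_uparts_abs_eq_neg_plus_pos:
  "1 \<le> n \<Longrightarrow> card (uparts_abs n u UNIV q) = neg_count n u q + pos_count n u q"
  using sum_uparts_abs_last[where K = "\<lambda>_. 1"] by simp

lemma card_abs_eq_int_neg:
  "card {v :: int. \<bar>v\<bar> = int k \<and> R v \<and> v < 0} = (if 0 < k \<and> R (- int k) then 1 else 0)"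
proof -
  have "{v :: int. \<bar>v\<bar> = int k \<and> R v \<and> v < 0} = (if 0 < k \<and> R (- int k) then {- int k} else {})"
    by (auto simp: abs_eq_int_iff)
  then show ?thesis
    by simp
qed

lemma card_abs_eq_int_nonneg:
  "card {v :: int. \<bar>v\<bar> = int k \<and> R v \<and> 0 \<le> v} = (if R (int k) then 1 else 0)"
proof -
  have "{v :: int. \<bar>v\<bar> = int k \<and> R v \<and> 0 \<le> v} = (if R (int k) then {int k} else {})"
    by (auto simp: abs_eq_int_iff)
  then show ?thesis
    by simp
qed

lemma neg_count_zero:
  assumes "1 \<le> n" "q n = 0"
  shows "neg_count n u q = 0"
proof -
  have "\<bar>g n\<bar> = 0" if "g \<in> uparts_abs n u UNIV q" for g
    using that assms by (simp add: uparts_abs_def)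
  then have "{g \<in> uparts_abs n u UNIV q. g n < 0} = {}"
    by fastforce
  then show ?thesis
    unfolding neg_count_def by (simp only: card.empty)
qed

lemma neg_count_1: "neg_count 1 u q = (if 0 < q 1 then 1 else 0)"
  using card_uparts_abs_Suc[of 0 u q "\<lambda>v. v < 0"] card_abs_eq_int_neg[of "q 1" "\<lambda>_. True"]
  by (simp add: neg_count_def uparts_abs_0)

lemma pos_count_1: "pos_count 1 u q = 1"
  using card_uparts_abs_Suc[of 0 u q "\<lambda>v. 0 \<le> v"] card_abs_eq_int_nonneg[of "q 1" "\<lambda>_. True"]
  by (simp add: pos_count_def uparts_abs_0)

definition rises :: "(nat \<Rightarrow> nat) \<Rightarrow> nat \<Rightarrow> bool" where
  "rises q j \<longleftrightarrow> q j < q (Suc j)"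

lemma neg_pos_count_Suc_by_step:
  fixes u :: "nat \<Rightarrow> bool" and q :: "nat \<Rightarrow> nat"
  assumes "1 \<le> n"
  defines "step a b \<equiv> if upart_step u n a b then 1 else 0 :: nat"
  shows "neg_count (Suc n) u q =
      neg_count n u q * (if 0 < q (Suc n) then step (- int (q n)) (- int (q (Suc n))) else 0) +
      pos_count n u q * (if 0 < q (Suc n) then step (int (q n)) (- int (q (Suc n))) else 0)"
    and "pos_count (Suc n) u q =
      neg_count n u q * step (- int (q n)) (int (q (Suc n))) +
      pos_count n u q * step (int (q n)) (int (q (Suc n)))"
  using card_uparts_abs_Suc[of n u q "\<lambda>v. v < 0"] card_uparts_abs_Suc[of n u q "\<lambda>v. 0 \<le> v"] assms(1)
    sum_uparts_abs_last[OF assms(1), where u = u and q = q and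
      K = "\<lambda>a. card {v. \<bar>v\<bar> = int (q (Suc n)) \<and> upart_step u n a v \<and> v < 0}"]
    sum_uparts_abs_last[OF assms(1), where u = u and q = q and
      K = "\<lambda>a. card {v. \<bar>v\<bar> = int (q (Suc n)) \<and> upart_step u n a v \<and> 0 \<le> v}"]
  by (simp_all add: neg_count_def pos_count_def card_abs_eq_int_neg card_abs_eq_int_nonneg step_def)

(* Inside a stretch of constant absolute value, a negative entry may be followed by itself (across
   a descent) or by its opposite, a nonnegative entry only by itself (across an ascent); a strict
   rise of the absolute value allows every sign. *)
lemma neg_pos_count_Suc:
  assumes "1 \<le> n" "q n \<le> q (Suc n)"
  shows "neg_count (Suc n) u q =
      (if rises q n then neg_count n u q + pos_count n u q else if u n then 0 else neg_count n u q)"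
    and "pos_count (Suc n) u q =
      (if rises q n \<or> u n then neg_count n u q + pos_count n u q else neg_count n u q)"
proof -
  note neg = neg_pos_count_Suc_by_step(1)[OF assms(1), where u = u and q = q]
  note pos = neg_pos_count_Suc_by_step(2)[OF assms(1), where u = u and q = q]
  consider (rise) "q n < q (Suc n)" | (zero) "q n = 0" "q (Suc n) = 0"
    | (flat) "0 < q n" "q n = q (Suc n)"
    using assms(2) by linarith
  then have "neg_count (Suc n) u q =
      (if rises q n then neg_count n u q + pos_count n u q else if u n then 0 else neg_count n u q) \<and>
    pos_count (Suc n) u q =
      (if rises q n \<or> u n then neg_count n u q + pos_count n u q else neg_count n u q)"
  proof cases
    case rise
    then show ?thesis
      unfolding neg pos by (simp add: rises_def upart_step_if_abs_less)
  next
    case zero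
    then show ?thesis
      unfolding neg pos by (simp add: rises_def upart_step_same_abs neg_count_zero[OF assms(1)])
  next
    case flat
    then show ?thesis
      unfolding neg pos by (simp add: rises_def upart_step_same_abs)
  qed
  then show "neg_count (Suc n) u q =
      (if rises q n then neg_count n u q + pos_count n u q else if u n then 0 else neg_count n u q)"
    and "pos_count (Suc n) u q =
      (if rises q n \<or> u n then neg_count n u q + pos_count n u q else neg_count n u q)"
    by simp_all
qed

definition num_rises :: "nat \<Rightarrow> (nat \<Rightarrow> nat) \<Rightarrow> nat" where
  "num_rises n q = card {j. j < n \<and> rises q j}"

definition no_flat_peak :: "nat \<Rightarrow> (nat \<Rightarrow> bool) \<Rightarrow> (nat \<Rightarrow> nat) \<Rightarrow> bool" where
  "no_flat_peak n u q \<longleftrightarrow> (\<forall>p\<in>left_peaks n u. rises q (p - 1) \<or> rises q p)"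

definition flat_up_end :: "nat \<Rightarrow> (nat \<Rightarrow> bool) \<Rightarrow> (nat \<Rightarrow> nat) \<Rightarrow> bool" where
  "flat_up_end n u q \<longleftrightarrow> u (n - 1) \<and> \<not> rises q (n - 1)"

lemma num_rises_Suc: "num_rises (Suc n) q = num_rises n q + (if rises q n then 1 else 0)"
proof -
  have "{j. j < Suc n \<and> rises q j} = {j. j < n \<and> rises q j} \<union> (if rises q n then {n} else {})"
    by (auto simp: less_Suc_eq)
  then show ?thesis
    by (simp add: num_rises_def)
qed

lemma no_flat_peak_Suc:
  "1 \<le> n \<Longrightarrow> no_flat_peak (Suc n) u q \<longleftrightarrow>
    no_flat_peak n u q \<and> (u (n - 1) \<and> \<not> u n \<longrightarrow> rises q (n - 1) \<or> rises q n)"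
  unfolding no_flat_peak_def left_peaks_def by (auto simp: less_Suc_eq)

(* A left peak inside a stretch where q is constant admits no sign pattern, and each rise of q
   doubles the count; flat_up_end n u q means that the last entry is forced to be nonnegative. *)
definition sign_count_formula :: "nat \<Rightarrow> (nat \<Rightarrow> bool) \<Rightarrow> (nat \<Rightarrow> nat) \<Rightarrow> bool" where
  "sign_count_formula n u q \<longleftrightarrow>
    (if \<not> no_flat_peak n u q then neg_count n u q = 0 \<and> pos_count n u q = 0
     else if flat_up_end n u q then neg_count n u q = 0 \<and> pos_count n u q = 2 ^ num_rises n q
     else neg_count n u q = pos_count n u q \<and> 2 * pos_count n u q = 2 ^ num_rises n q)"

lemma sign_count_formula_1:
  assumes "q 0 = 0" "u 0"
  shows "sign_count_formula 1 u q"
proof -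
  have "num_rises 1 q = (if 0 < q 1 then 1 else 0)"
    using num_rises_Suc[of 0 q] assms(1) by (simp add: num_rises_def rises_def)
  moreover have "no_flat_peak 1 u q"
    by (simp add: no_flat_peak_def left_peaks_def)
  moreover have "flat_up_end 1 u q \<longleftrightarrow> q 1 = 0"
    using assms by (simp add: flat_up_end_def rises_def)
  ultimately show ?thesis
    using neg_count_1[of u q] pos_count_1[of u q] by (simp add: sign_count_formula_def)
qed

lemma sign_count_formula_Suc:
  assumes "1 \<le> n" "q n \<le> q (Suc n)" "sign_count_formula n u q"
  shows "sign_count_formula (Suc n) u q"
proof -
  let ?N = "neg_count n u q" and ?P = "pos_count n u q" and ?r = "num_rises n q"
  have dead: "\<not> no_flat_peak n u q \<Longrightarrow> ?N = 0 \<and> ?P = 0"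
    and flat: "no_flat_peak n u q \<Longrightarrow> flat_up_end n u q \<Longrightarrow> ?N = 0"
    and total: "no_flat_peak n u q \<Longrightarrow> ?N + ?P = 2 ^ ?r"
    and half: "no_flat_peak n u q \<Longrightarrow> \<not> flat_up_end n u q \<Longrightarrow> ?N = ?P \<and> 2 * ?P = 2 ^ ?r"
    using assms(3) by (auto simp: sign_count_formula_def split: if_splits)
  note rec = neg_pos_count_Suc[OF assms(1,2), of u]
  have flat_end: "flat_up_end (Suc n) u q \<longleftrightarrow> u n \<and> \<not> rises q n"
    by (simp add: flat_up_end_def)
  show ?thesis
  proof (cases "rises q n \<or> u n")
    case True
    then have "no_flat_peak (Suc n) u q \<longleftrightarrow> no_flat_peak n u q"
      using no_flat_peak_Suc[OF assms(1)] by blast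
    then show ?thesis
      using True dead total
      by (cases "rises q n") (simp_all add: sign_count_formula_def rec num_rises_Suc flat_end)
  next
    case False
    then have alive: "no_flat_peak (Suc n) u q \<longleftrightarrow> no_flat_peak n u q \<and> \<not> flat_up_end n u q"
      using no_flat_peak_Suc[OF assms(1)] by (auto simp: flat_up_end_def)
    show ?thesis
    proof (cases "no_flat_peak n u q \<and> \<not> flat_up_end n u q")
      case True
      then show ?thesis
        using False alive half by (simp add: sign_count_formula_def rec num_rises_Suc flat_end)
    next
      case not_alive: False
      then have "?N = 0"
        using dead flat by blast
      then show ?thesis
        using False alive not_alive by (simp add: sign_count_formula_def rec flat_end)
    qed
  qed
qed

lemma card_uparts_abs:
  assumes "1 \<le> n" "q 0 = 0" "u 0" "\<forall>j<n. q j \<le> q (Suc j)"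
  shows "card (uparts_abs n u UNIV q) = (if no_flat_peak n u q then 2 ^ num_rises n q else 0)"
proof -
  have "sign_count_formula n u q"
    using assms(1,4)
  proof (induction n rule: nat_induct_at_least)
    case base
    show ?case
      using assms(2,3) by (rule sign_count_formula_1)
  next
    case (Suc n)
    then show ?case
      by (intro sign_count_formula_Suc) simp_all
  qed
  then show ?thesis
    using card_uparts_abs_eq_neg_plus_pos[OF assms(1), of u q]
    by (auto simp: sign_count_formula_def split: if_splits)
qed

section \<open>Decomposition by the increments of the absolute values\<close>

definition psum :: "(nat \<Rightarrow> nat) \<Rightarrow> nat \<Rightarrow> nat" where
  "psum d i = (\<Sum>j<i. d j)"

lemma psum_0 [simp]: "psum d 0 = 0"
  by (simp add: psum_def)

lemma psum_Suc [simp]: "psum d (Suc i) = psum d i + d i"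
  by (simp add: psum_def)

lemma psum_mono: "i \<le> j \<Longrightarrow> psum d i \<le> psum d j"
  unfolding psum_def by (rule sum_mono2) auto

lemma psum_pos: "0 < d 0 \<Longrightarrow> 1 \<le> i \<Longrightarrow> 0 < psum d i"
  using psum_mono[of 1 i d] by simp

lemma rises_psum: "rises (psum d) j \<longleftrightarrow> 0 < d j"
  by (simp add: rises_def)

definition compositions_le :: "nat set \<Rightarrow> nat \<Rightarrow> (nat \<Rightarrow> nat) set" where
  "compositions_le X M = {d \<in> X \<rightarrow>\<^sub>E UNIV. sum d X \<le> M}"

lemma finite_compositions_le:
  assumes "finite X"
  shows "finite (compositions_le X M)"
proof (rule finite_subset)
  show "compositions_le X M \<subseteq> X \<rightarrow>\<^sub>E {0..M}"
  proof
    fix d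
    assume d: "d \<in> compositions_le X M"
    have "d j \<le> M" if "j \<in> X" for j
      using d member_le_sum[of j X d] that assms by (simp add: compositions_le_def)
    then show "d \<in> X \<rightarrow>\<^sub>E {0..M}"
      using d by (simp add: compositions_le_def PiE_iff)
  qed
  show "finite (X \<rightarrow>\<^sub>E {0..M})"
    using assms by (simp add: finite_PiE)
qed

lemma psum_le_of_compositions_le:
  "d \<in> compositions_le {0..<n} m \<Longrightarrow> psum d n \<le> m"
  by (simp add: compositions_le_def psum_def lessThan_atLeast0)

definition abs_profile :: "(nat \<Rightarrow> int) \<Rightarrow> nat \<Rightarrow> nat" where
  "abs_profile g i = (if i = 0 then 0 else nat \<bar>g i\<bar>)"

(* The virtual entry at position 0 has absolute value 0, so d 0 = |g 1|. *)
definition differences :: "nat \<Rightarrow> (nat \<Rightarrow> int) \<Rightarrow> nat \<Rightarrow> nat" where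
  "differences n g = restrict (\<lambda>j. abs_profile g (Suc j) - abs_profile g j) {0..<n}"

lemma psum_differences:
  assumes "g \<in> uparts n u V" "i \<le> n"
  shows "psum (differences n g) i = abs_profile g i"
  using assms(2)
proof (induction i)
  case 0
  then show ?case
    by (simp add: abs_profile_def)
next
  case (Suc i)
  have "abs_profile g i \<le> abs_profile g (Suc i)"
  proof (cases "i = 0")
    case False
    then have "upart_step u i (g i) (g (Suc i))"
      using assms(1) Suc.prems by (simp add: uparts_def is_upart_def)
    then show ?thesis
      using False upart_step_abs_le by (simp add: abs_profile_def nat_mono)
  qed (simp add: abs_profile_def)
  then show ?case
    using Suc by (simp add: differences_def)
qed

lemma uparts_differences_fibre:
  assumes "d \<in> compositions_le {0..<n} m"
  shows "{g \<in> uparts n u V. differences n g = d} = uparts_abs n u V (psum d)"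
proof (intro set_eqI iffI)
  fix g
  assume "g \<in> {g \<in> uparts n u V. differences n g = d}"
  then have g: "g \<in> uparts n u V" and d: "d = differences n g"
    by simp_all
  have "\<bar>g i\<bar> = int (psum d i)" if "i \<in> {1..n}" for i
    using that psum_differences[OF g, of i] by (simp add: d abs_profile_def)
  then show "g \<in> uparts_abs n u V (psum d)"
    using g by (simp add: uparts_abs_def)
next
  fix g
  assume g: "g \<in> uparts_abs n u V (psum d)"
  then have profile: "abs_profile g i = psum d i" if "i \<le> n" for i
    using that by (cases "i = 0") (auto simp: uparts_abs_def abs_profile_def)
  have "differences n g j = d j" for j
  proof (cases "j < n")
    case True
    then show ?thesis
      using profile[of j] profile[of "Suc j"] by (simp add: differences_def)
  next
    case False
    then show ?thesis
      using assms PiE_arb[of d "{0..<n}" "\<lambda>_. UNIV" j] by (simp add: differences_def compositions_le_def)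
  qed
  then show "g \<in> {g \<in> uparts n u V. differences n g = d}"
    using g by (auto simp: uparts_abs_def)
qed

lemma card_uparts_by_differences:
  assumes "V \<subseteq> {- int m..int m}"
  shows "card (uparts n u V) = (\<Sum>d\<in>compositions_le {0..<n} m. card (uparts_abs n u V (psum d)))"
proof -
  have "finite (uparts n u V)"
    using assms by (intro finite_uparts) (rule finite_subset, auto)
  moreover have "differences n g \<in> compositions_le {0..<n} m" if "g \<in> uparts n u V" for g
  proof -
    have "abs_profile g n \<le> m"
    proof (cases "n = 0")
      case False
      then have "g n \<in> V"
        using that by (simp add: uparts_def PiE_iff)
      then have "g n \<in> {- int m..int m}"
        using assms by blast
      then show ?thesis
        by (simp add: abs_profile_def nat_le_iff abs_le_iff)
    qed (simp add: abs_profile_def)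
    then have "sum (differences n g) {0..<n} \<le> m"
      using psum_differences[OF that order_refl] by (simp add: psum_def lessThan_atLeast0)
    then show ?thesis
      by (simp add: compositions_le_def differences_def)
  qed
  ultimately have "card (uparts n u V) =
      (\<Sum>d\<in>compositions_le {0..<n} m. card {g \<in> uparts n u V. differences n g = d})"
    by (intro card_eq_sum_card_fibres) (auto simp: finite_compositions_le)
  also have "\<dots> = (\<Sum>d\<in>compositions_le {0..<n} m. card (uparts_abs n u V (psum d)))"
    by (intro sum.cong refl arg_cong[where f = card] uparts_differences_fibre)
  finally show ?thesis .
qed

definition support :: "nat set \<Rightarrow> (nat \<Rightarrow> nat) \<Rightarrow> nat set" where
  "support X d = {j \<in> X. 0 < d j}"

definition pair_blocks :: "nat set \<Rightarrow> nat set set" where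
  "pair_blocks P = (\<lambda>p. {p - 1, p}) ` P"

lemma num_rises_psum: "num_rises n (psum d) = card (support {0..<n} d)"
  unfolding num_rises_def support_def rises_psum by (rule arg_cong[where f = card]) auto

lemma hits_pair_blocks:
  assumes "P \<subseteq> {1..<n}"
  shows "hits (pair_blocks P) (support {0..<n} d) \<longleftrightarrow> (\<forall>p\<in>P. 0 < d (p - 1) \<or> 0 < d p)"
  using assms unfolding hits_def pair_blocks_def support_def by fastforce

lemma no_flat_peak_psum:
  "no_flat_peak n u (psum d) \<longleftrightarrow> hits (pair_blocks (left_peaks n u)) (support {0..<n} d)"
proof -
  have "left_peaks n u \<subseteq> {1..<n}"
    by (auto simp: left_peaks_def)
  then show ?thesis
    unfolding no_flat_peak_def rises_psum by (simp add: hits_pair_blocks)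
qed

(* If d 0 > 0 (no entry is 0), the pair {0, 1} of a left peak at 1 is always hit. *)
lemma no_flat_peak_psum_peaks:
  assumes "0 < d 0"
  shows "no_flat_peak n u (psum d) \<longleftrightarrow> hits (pair_blocks (peaks n u)) (support {0..<n} d)"
proof -
  have "(\<forall>p\<in>left_peaks n u. 0 < d (p - 1) \<or> 0 < d p) \<longleftrightarrow> (\<forall>p\<in>peaks n u. 0 < d (p - 1) \<or> 0 < d p)"
  proof
    assume "\<forall>p\<in>peaks n u. 0 < d (p - 1) \<or> 0 < d p"
    moreover have "p \<in> peaks n u" if "p \<in> left_peaks n u" "p \<noteq> 1" for p
      using that by (auto simp: left_peaks_def peaks_def)
    ultimately show "\<forall>p\<in>left_peaks n u. 0 < d (p - 1) \<or> 0 < d p"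
      using assms by force
  qed (auto simp: left_peaks_def peaks_def)
  moreover have "peaks n u \<subseteq> {1..<n}"
    by (auto simp: peaks_def)
  ultimately show ?thesis
    unfolding no_flat_peak_def rises_psum by (simp add: hits_pair_blocks)
qed

lemma uparts_abs_eq_UNIV:
  assumes "\<And>i v. i \<in> {1..n} \<Longrightarrow> \<bar>v\<bar> = int (q i) \<Longrightarrow> v \<in> V"
  shows "uparts_abs n u V q = uparts_abs n u UNIV q"
  using assms by (auto simp: uparts_abs_def uparts_def PiE_iff)

lemma uparts_abs_psum_empty:
  assumes "1 \<le> n" "d 0 = 0" "0 \<notin> V"
  shows "uparts_abs n u V (psum d) = {}"
proof -
  have "g 1 \<in> V" "\<bar>g 1\<bar> = int (psum d 1)" if "g \<in> uparts_abs n u V (psum d)" for g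
    using that assms(1) by (auto simp: uparts_abs_def uparts_def PiE_iff)
  then show ?thesis
    using assms(2,3) by fastforce
qed

lemma card_uparts_abs_psum:
  assumes "1 \<le> n" "u 0"
  shows "card (uparts_abs n u UNIV (psum d)) =
    (if no_flat_peak n u (psum d) then 2 ^ card (support {0..<n} d) else 0)"
  using card_uparts_abs[of n "psum d" u] assms psum_mono num_rises_psum by simp

lemma card_uparts_lpk:
  assumes "1 \<le> n" "u 0"
  shows "card (uparts n u {- int m..int m}) =
    (\<Sum>d\<in>compositions_le {0..<n} m.
      if hits (pair_blocks (left_peaks n u)) (support {0..<n} d) then 2 ^ card (support {0..<n} d) else 0)"
  unfolding card_uparts_by_differences[OF order_refl]
proof (intro sum.cong refl)
  fix d
  assume d: "d \<in> compositions_le {0..<n} m"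
  have "uparts_abs n u {- int m..int m} (psum d) = uparts_abs n u UNIV (psum d)"
  proof (rule uparts_abs_eq_UNIV)
    fix i v
    assume "i \<in> {1..n}" "\<bar>v\<bar> = int (psum d i)"
    moreover have "psum d i \<le> m"
      using psum_mono[of i n d] psum_le_of_compositions_le[OF d] \<open>i \<in> {1..n}\<close> by simp
    ultimately show "v \<in> {- int m..int m}"
      by auto
  qed
  then show "card (uparts_abs n u {- int m..int m} (psum d)) =
      (if hits (pair_blocks (left_peaks n u)) (support {0..<n} d) then 2 ^ card (support {0..<n} d) else 0)"
    using card_uparts_abs_psum[of n u d, OF assms] no_flat_peak_psum by simp
qed

lemma card_uparts_pk:
  assumes "1 \<le> n" "u 0"
  shows "card (uparts n u ({- int m..int m} - {0})) =
    (\<Sum>d\<in>compositions_le {0..<n} m.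
      if hits (pair_blocks (peaks n u)) (support {0..<n} d)
      then (if 0 \<in> support {0..<n} d then 2 ^ card (support {0..<n} d) else 0) else 0)"
  unfolding card_uparts_by_differences[OF Diff_subset]
proof (intro sum.cong refl)
  fix d
  assume d: "d \<in> compositions_le {0..<n} m"
  have zero_iff: "0 \<in> support {0..<n} d \<longleftrightarrow> 0 < d 0"
    using assms(1) by (simp add: support_def)
  show "card (uparts_abs n u ({- int m..int m} - {0}) (psum d)) =
      (if hits (pair_blocks (peaks n u)) (support {0..<n} d)
       then (if 0 \<in> support {0..<n} d then 2 ^ card (support {0..<n} d) else 0) else 0)"
  proof (cases "0 < d 0")
    case True
    have "uparts_abs n u ({- int m..int m} - {0}) (psum d) = uparts_abs n u UNIV (psum d)"
    proof (rule uparts_abs_eq_UNIV)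
      fix i v
      assume i: "i \<in> {1..n}" and v: "\<bar>v\<bar> = int (psum d i)"
      have "0 < psum d i" "psum d i \<le> m"
        using psum_pos[of d i, OF True] psum_mono[of i n d] psum_le_of_compositions_le[OF d] i by auto
      then show "v \<in> {- int m..int m} - {0}"
        using v by auto
    qed
    then show ?thesis
      using card_uparts_abs_psum[of n u d, OF assms] no_flat_peak_psum_peaks[where d = d, OF True] True zero_iff
      by simp
  next
    case False
    then show ?thesis
      using uparts_abs_psum_empty[OF assms(1)] zero_iff by simp
  qed
qed

lemma is_upart_psum:
  assumes "0 < d 0"
  shows "is_upart n u (\<lambda>i. int (psum d i)) \<longleftrightarrow> hits ((\<lambda>i. {i}) ` descents n u) (support {0..<n} d)"
proof -
  have "upart_step u i (int (psum d i)) (int (psum d (Suc i))) \<longleftrightarrow> u i \<or> 0 < d i" if "1 \<le> i" for i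
    using psum_pos[of d i, OF assms that]
    by (cases "d i = 0") (auto simp: upart_step_if_abs_less upart_step_same_abs)
  then show ?thesis
    unfolding is_upart_def hits_def descents_def support_def by auto
qed

lemma uparts_abs_psum_positive:
  assumes "0 < d 0" "psum d n \<le> m"
  shows "uparts_abs n u {1..int m} (psum d) =
    (if is_upart n u (\<lambda>i. int (psum d i)) then {restrict (\<lambda>i. int (psum d i)) {1..n}} else {})"
proof -
  let ?g = "restrict (\<lambda>i. int (psum d i)) {1..n}"
  have "g = ?g" if "g \<in> uparts_abs n u {1..int m} (psum d)" for g
  proof
    fix i
    show "g i = ?g i"
    proof (cases "i \<in> {1..n}")
      case True
      then have "g i \<in> {1..int m}" "\<bar>g i\<bar> = int (psum d i)"
        using that by (auto simp: uparts_abs_def uparts_def PiE_iff)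
      then show ?thesis
        using True by simp
    next
      case False
      then show ?thesis
        using that PiE_arb[of g "{1..n}" "\<lambda>_. {1..int m}" i] by (auto simp: uparts_abs_def uparts_def)
    qed
  qed
  moreover have "?g \<in> uparts_abs n u {1..int m} (psum d) \<longleftrightarrow> is_upart n u (\<lambda>i. int (psum d i))"
  proof -
    have "?g \<in> {1..n} \<rightarrow>\<^sub>E {1..int m}"
      using psum_pos[of d, OF assms(1)] psum_mono[of _ n d] assms(2) by force
    moreover have "is_upart n u ?g \<longleftrightarrow> is_upart n u (\<lambda>i. int (psum d i))"
      by (rule is_upart_cong) simp
    ultimately show ?thesis
      by (simp add: uparts_abs_def uparts_def)
  qed
  ultimately show ?thesis
    by auto
qed

lemma card_uparts_des:
  assumes "1 \<le> n"
  shows "card (uparts n u {1..int m}) =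
    (\<Sum>d\<in>compositions_le {0..<n} m.
      if hits ((\<lambda>i. {i}) ` descents n u) (support {0..<n} d)
      then (if 0 \<in> support {0..<n} d then 1 else 0) else 0)"
proof -
  have range: "{1..int m} \<subseteq> {- int m..int m}"
    by auto
  show ?thesis
    unfolding card_uparts_by_differences[OF range]
  proof (intro sum.cong refl)
    fix d
    assume d: "d \<in> compositions_le {0..<n} m"
    have zero_iff: "0 \<in> support {0..<n} d \<longleftrightarrow> 0 < d 0"
      using assms(1) by (simp add: support_def)
    show "card (uparts_abs n u {1..int m} (psum d)) =
        (if hits ((\<lambda>i. {i}) ` descents n u) (support {0..<n} d)
         then (if 0 \<in> support {0..<n} d then 1 else 0) else 0)"
    proof (cases "0 < d 0")
      case True
      then show ?thesis
        using uparts_abs_psum_positive[OF True psum_le_of_compositions_le[OF d]] is_upart_psum[where d = d, OF True]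
          zero_iff by simp
    next
      case False
      then show ?thesis
        using uparts_abs_psum_empty[OF assms(1)] zero_iff by simp
    qed
  qed
qed

section \<open>More peaks, fewer partitions\<close>

lemma support_restrict_permute:
  assumes "\<tau> permutes X"
  shows "support X (restrict (d \<circ> inv \<tau>) X) = \<tau> ` support X d"
proof
  have inv: "inv \<tau> permutes X"
    using assms by (rule permutes_inv)
  show "support X (restrict (d \<circ> inv \<tau>) X) \<subseteq> \<tau> ` support X d"
  proof
    fix j
    assume j: "j \<in> support X (restrict (d \<circ> inv \<tau>) X)"
    then have "j \<in> X"
      by (simp add: support_def)
    then have "inv \<tau> j \<in> support X d"
      using j permutes_in_image[OF inv, of j] by (simp add: support_def)
    moreover have "j = \<tau> (inv \<tau> j)"
      using permutes_inverses(1)[OF assms] by simp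
    ultimately show "j \<in> \<tau> ` support X d"
      by blast
  qed
  show "\<tau> ` support X d \<subseteq> support X (restrict (d \<circ> inv \<tau>) X)"
  proof
    fix j
    assume "j \<in> \<tau> ` support X d"
    then obtain i where "i \<in> X" "0 < d i" "j = \<tau> i"
      by (auto simp: support_def)
    moreover have "\<tau> i \<in> X" "inv \<tau> (\<tau> i) = i"
      using \<open>i \<in> X\<close> permutes_in_image[OF assms] permutes_inverses(2)[OF assms] by simp_all
    ultimately show "j \<in> support X (restrict (d \<circ> inv \<tau>) X)"
      by (simp add: support_def)
  qed
qed

lemma sum_compositions_le_permute:
  assumes "finite X" "\<tau> permutes X"
  shows "(\<Sum>d\<in>compositions_le X M. f (\<tau> ` support X d)) = (\<Sum>d\<in>compositions_le X M. f (support X d))"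
proof -
  let ?\<phi> = "\<lambda>d. restrict (d \<circ> inv \<tau>) X"
  have inv: "inv \<tau> permutes X"
    using assms(2) by (rule permutes_inv)
  have eq: "sum (?\<phi> d) X = sum d X" for d
    using sum.permute[OF inv, of d] by (simp add: comp_def)
  have "bij_betw ?\<phi> {d \<in> X \<rightarrow>\<^sub>E UNIV. sum (?\<phi> d) X \<le> M} {d \<in> X \<rightarrow>\<^sub>E UNIV. sum d X \<le> M}"
    by (rule bij_betw_Collect[OF bij_betw_PiE_permute[OF inv]])
  then have "bij_betw ?\<phi> (compositions_le X M) (compositions_le X M)"
    unfolding eq compositions_le_def .
  then show ?thesis
    using sum.reindex_bij_betw[of ?\<phi> "compositions_le X M" "compositions_le X M" "\<lambda>d. f (support X d)"]
    by (simp only: support_restrict_permute[OF assms(2)])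
qed

lemma sum_hits_le:
  fixes w :: "nat set \<Rightarrow> nat"
  assumes "finite X" "Y \<subseteq> X" "F \<subseteq> Pow Y" "G \<subseteq> Pow Y" "pairwise disjnt F" "pairwise disjnt G"
    "\<forall>S\<in>F. card S = k" "\<forall>T\<in>G. card T = k" "card F \<le> card G"
    and weight_invariant: "\<And>\<tau> C. \<tau> permutes Y \<Longrightarrow> w (\<tau> ` C) = w C"
  shows "(\<Sum>d\<in>compositions_le X M. if hits G (support X d) then w (support X d) else 0)
    \<le> (\<Sum>d\<in>compositions_le X M. if hits F (support X d) then w (support X d) else 0)"
proof -
  obtain \<tau> where \<tau>: "\<tau> permutes Y" "\<forall>S\<in>F. \<exists>T\<in>G. \<tau> ` T = S"
    using exists_permutes_blocks[OF finite_subset[OF assms(2,1)] assms(3-9)] by blast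
  have "(\<Sum>d\<in>compositions_le X M. if hits G (support X d) then w (support X d) else 0)
      \<le> (\<Sum>d\<in>compositions_le X M. if hits F (\<tau> ` support X d) then w (\<tau> ` support X d) else 0)"
    by (intro sum_mono) (simp add: hits_image[OF \<tau>(2)] weight_invariant[OF \<tau>(1)])
  also have "\<dots> = (\<Sum>d\<in>compositions_le X M. if hits F (support X d) then w (support X d) else 0)"
    by (rule sum_compositions_le_permute[OF assms(1) permutes_subset[OF \<tau>(1) assms(2)]])
  finally show ?thesis .
qed

lemma pair_blocks_left_peaks:
  assumes "P \<subseteq> left_peaks n u"
  shows "pair_blocks P \<subseteq> Pow {0..<n}"
    and "pairwise disjnt (pair_blocks P)"
    and "\<forall>S\<in>pair_blocks P. card S = 2"
    and "card (pair_blocks P) = card P"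
proof -
  have P: "1 \<le> p" "p < n" "u (p - 1)" "\<not> u p" if "p \<in> P" for p
    using assms that by (auto simp: left_peaks_def)
  show "pair_blocks P \<subseteq> Pow {0..<n}"
    using P(2) by (fastforce simp: pair_blocks_def)
  show "pairwise disjnt (pair_blocks P)"
  proof (rule pairwiseI)
    fix S T
    assume "S \<in> pair_blocks P" "T \<in> pair_blocks P" "S \<noteq> T"
    then obtain p p' where "p \<in> P" "p' \<in> P" "p \<noteq> p'" "S = {p - 1, p}" "T = {p' - 1, p'}"
      by (auto simp: pair_blocks_def)
    moreover have "p \<noteq> p' - 1" "p' \<noteq> p - 1"
      using P \<open>p \<in> P\<close> \<open>p' \<in> P\<close> by metis+
    ultimately show "disjnt S T"
      using P(1) by (auto simp: disjnt_def)
  qed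
  have "card {p - 1, p} = 2" if "p \<in> P" for p
    using P(1)[OF that] by simp
  then show "\<forall>S\<in>pair_blocks P. card S = 2"
    by (auto simp: pair_blocks_def)
  have "inj_on (\<lambda>p. {p - 1, p}) P"
    by (rule inj_onI) (use P in \<open>auto simp: doubleton_eq_iff\<close>)
  then show "card (pair_blocks P) = card P"
    by (simp add: pair_blocks_def card_image)
qed

lemma pair_blocks_peaks: "pair_blocks (peaks n u) \<subseteq> Pow {1..<n}"
  by (auto simp: pair_blocks_def peaks_def)

lemma singleton_blocks:
  "(\<lambda>i. {i}) ` D \<subseteq> Pow D" "pairwise disjnt ((\<lambda>i. {i}) ` D)" "\<forall>S\<in>(\<lambda>i. {i}) ` D. card S = 1"
  "card ((\<lambda>i. {i}) ` D) = card D"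
  by (auto simp: pairwise_def disjnt_def card_image)

lemma card_uparts_lpk_le:
  assumes "1 \<le> n" "ua 0" "ub 0" "card (left_peaks n ua) \<le> card (left_peaks n ub)"
  shows "card (uparts n ub {- int m..int m}) \<le> card (uparts n ua {- int m..int m})"
proof -
  note a = pair_blocks_left_peaks[OF order_refl, of n ua]
  note b = pair_blocks_left_peaks[OF order_refl, of n ub]
  have le: "card (pair_blocks (left_peaks n ua)) \<le> card (pair_blocks (left_peaks n ub))"
    using assms(4) a(4) b(4) by simp
  have "(\<Sum>d\<in>compositions_le {0..<n} m.
        if hits (pair_blocks (left_peaks n ub)) (support {0..<n} d) then (2::nat) ^ card (support {0..<n} d) else 0)
      \<le> (\<Sum>d\<in>compositions_le {0..<n} m.
        if hits (pair_blocks (left_peaks n ua)) (support {0..<n} d) then 2 ^ card (support {0..<n} d) else 0)"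
    by (rule sum_hits_le[where w = "\<lambda>C. 2 ^ card C",
          OF finite_atLeastLessThan order_refl a(1) b(1) a(2) b(2) a(3) b(3) le])
      (metis card_image_permutes)
  then show ?thesis
    unfolding card_uparts_lpk[where u = ua, OF assms(1,2)] card_uparts_lpk[where u = ub, OF assms(1,3)] .
qed

lemma card_uparts_pk_le:
  assumes "1 \<le> n" "ua 0" "ub 0" "card (peaks n ua) \<le> card (peaks n ub)"
  shows "card (uparts n ub ({- int m..int m} - {0})) \<le> card (uparts n ua ({- int m..int m} - {0}))"
proof -
  note a = pair_blocks_left_peaks[OF peaks_subset_left_peaks, of n ua]
  note b = pair_blocks_left_peaks[OF peaks_subset_left_peaks, of n ub]
  have le: "card (pair_blocks (peaks n ua)) \<le> card (pair_blocks (peaks n ub))"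
    using assms(4) a(4) b(4) by simp
  have weight: "(if 0 \<in> \<tau> ` C then 2 ^ card (\<tau> ` C) else 0) = (if 0 \<in> C then 2 ^ card C else 0 :: nat)"
    if "\<tau> permutes {1..<n}" for \<tau> C
    using mem_image_permutes_not_in[OF that, of 0] card_image_permutes[OF that] by simp
  have sub: "{1..<n} \<subseteq> {0..<n}"
    by auto
  have "(\<Sum>d\<in>compositions_le {0..<n} m.
        if hits (pair_blocks (peaks n ub)) (support {0..<n} d)
        then (if 0 \<in> support {0..<n} d then (2::nat) ^ card (support {0..<n} d) else 0) else 0)
      \<le> (\<Sum>d\<in>compositions_le {0..<n} m.
        if hits (pair_blocks (peaks n ua)) (support {0..<n} d)
        then (if 0 \<in> support {0..<n} d then 2 ^ card (support {0..<n} d) else 0) else 0)"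
    by (rule sum_hits_le[where w = "\<lambda>C. if 0 \<in> C then 2 ^ card C else 0",
          OF finite_atLeastLessThan sub pair_blocks_peaks pair_blocks_peaks a(2) b(2) a(3) b(3)
          le weight])
  then show ?thesis
    unfolding card_uparts_pk[where u = ua, OF assms(1,2)] card_uparts_pk[where u = ub, OF assms(1,3)] .
qed

lemma card_uparts_des_le:
  assumes "1 \<le> n" "card (descents n ua) \<le> card (descents n ub)"
  shows "card (uparts n ub {1..int m}) \<le> card (uparts n ua {1..int m})"
proof -
  have sub: "{1..<n} \<subseteq> {0..<n}" and desc: "(\<lambda>i. {i}) ` descents n u \<subseteq> Pow {1..<n}" for u
    by (auto simp: descents_def)
  have le: "card ((\<lambda>i. {i}) ` descents n ua) \<le> card ((\<lambda>i. {i}) ` descents n ub)"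
    using assms(2) by (simp add: singleton_blocks(4))
  have weight: "(if 0 \<in> \<tau> ` C then 1 else 0) = (if 0 \<in> C then 1 else 0 :: nat)"
    if "\<tau> permutes {1..<n}" for \<tau> C
    using mem_image_permutes_not_in[OF that, of 0] by simp
  have "(\<Sum>d\<in>compositions_le {0..<n} m.
        if hits ((\<lambda>i. {i}) ` descents n ub) (support {0..<n} d)
        then (if 0 \<in> support {0..<n} d then 1::nat else 0) else 0)
      \<le> (\<Sum>d\<in>compositions_le {0..<n} m.
        if hits ((\<lambda>i. {i}) ` descents n ua) (support {0..<n} d)
        then (if 0 \<in> support {0..<n} d then 1 else 0) else 0)"
    by (rule sum_hits_le[where w = "\<lambda>C. if 0 \<in> C then 1 else 0",
          OF finite_atLeastLessThan sub desc desc singleton_blocks(2) singleton_blocks(2)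
          singleton_blocks(3) singleton_blocks(3) le weight])
  then show ?thesis
    unfolding card_uparts_des[OF assms(1)] .
qed

lemma Omega_pi_antimono:
  assumes "1 \<le> n" "\<pi> permutes {1..n}" "\<sigma> permutes {1..n}" "lpk n \<pi> \<le> lpk n \<sigma>"
  shows "Omega_pi n \<sigma> m \<le> Omega_pi n \<pi> m"
  unfolding Omega_pi_def card_ppartitions_eq_card_uparts[OF assms(2)]
    card_ppartitions_eq_card_uparts[OF assms(3)]
  by (rule card_uparts_lpk_le[where ua = "ascent \<pi>" and ub = "ascent \<sigma>",
        OF assms(1) ascent_0[OF assms(2,1)] ascent_0[OF assms(3,1)]])
    (use assms(4) in \<open>simp only: lpk_eq_card_left_peaks[OF assms(2)] lpk_eq_card_left_peaks[OF assms(3)]\<close>)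

lemma Omega_star_pi_antimono:
  assumes "1 \<le> n" "\<pi> permutes {1..n}" "\<sigma> permutes {1..n}" "pk n \<pi> \<le> pk n \<sigma>"
  shows "Omega_star_pi n \<sigma> m \<le> Omega_star_pi n \<pi> m"
  unfolding Omega_star_pi_def card_ppartitions_eq_card_uparts[OF assms(2)]
    card_ppartitions_eq_card_uparts[OF assms(3)]
  by (rule card_uparts_pk_le[where ua = "ascent \<pi>" and ub = "ascent \<sigma>",
        OF assms(1) ascent_0[OF assms(2,1)] ascent_0[OF assms(3,1)]])
    (use assms(4) in \<open>simp only: pk_eq_card_peaks[OF assms(2)] pk_eq_card_peaks[OF assms(3)]\<close>)

lemma Omega_plus_pi_antimono:
  assumes "1 \<le> n" "\<pi> permutes {1..n}" "\<sigma> permutes {1..n}" "des n \<pi> \<le> des n \<sigma>"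
  shows "Omega_plus_pi n \<sigma> m \<le> Omega_plus_pi n \<pi> m"
  unfolding Omega_plus_pi_def card_ppartitions_eq_card_uparts[OF assms(2)]
    card_ppartitions_eq_card_uparts[OF assms(3)]
  by (rule card_uparts_des_le[OF assms(1)])
    (use assms(4) in \<open>simp only: des_eq_card_descents[OF assms(2)] des_eq_card_descents[OF assms(3)]\<close>)

section \<open>Attained values of the statistics\<close>

lemma card_Union_pair_blocks:
  assumes "P \<subseteq> left_peaks n u"
  shows "card (\<Union>(pair_blocks P)) = 2 * card P"
proof -
  note pb = pair_blocks_left_peaks[OF assms]
  have "card (\<Union>(pair_blocks P)) = sum card (pair_blocks P)"
    using pb(1) by (intro card_Union_disjoint[OF pb(2)]) (auto intro: finite_subset)
  also have "\<dots> = 2 * card P"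
    using pb(3,4) by simp
  finally show ?thesis .
qed

lemma card_left_peaks_le: "2 * card (left_peaks n u) \<le> n"
proof -
  have "card (\<Union>(pair_blocks (left_peaks n u))) \<le> card {0..<n}"
    using pair_blocks_left_peaks(1)[OF order_refl] by (intro card_mono) auto
  then show ?thesis
    by (simp add: card_Union_pair_blocks[OF order_refl])
qed

lemma card_peaks_le: "1 \<le> n \<Longrightarrow> 2 * card (peaks n u) + 1 \<le> n"
proof -
  assume "1 \<le> n"
  have "card (\<Union>(pair_blocks (peaks n u))) \<le> card {1..<n}"
    using pair_blocks_peaks by (intro card_mono) auto
  then show ?thesis
    using \<open>1 \<le> n\<close> by (simp add: card_Union_pair_blocks[OF peaks_subset_left_peaks])
qed

lemma card_descents_le: "1 \<le> n \<Longrightarrow> card (descents n u) + 1 \<le> n"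
proof -
  assume "1 \<le> n"
  have "card (descents n u) \<le> card {1..<n}"
    by (intro card_mono) (auto simp: descents_def)
  then show ?thesis
    using \<open>1 \<le> n\<close> by simp
qed

definition swap_pairs :: "nat \<Rightarrow> nat \<Rightarrow> nat \<Rightarrow> nat" where
  "swap_pairs a k i = (if a \<le> i \<and> i < a + 2 * k then (if even (i - a) then Suc i else i - 1) else i)"

lemma swap_pairs_permutes:
  assumes "1 \<le> a" "a + 2 * k \<le> Suc n"
  shows "swap_pairs a k permutes {1..n}"
proof (rule involution_permutes)
  fix i
  show "swap_pairs a k (swap_pairs a k i) = i"
    unfolding swap_pairs_def by (auto simp: le_diff_conv) presburger+
  show "i \<notin> {1..n} \<Longrightarrow> swap_pairs a k i = i"
    using assms by (auto simp: swap_pairs_def)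
qed

lemma descents_swap_pairs:
  assumes "1 \<le> a" "a + 2 * k \<le> Suc n"
  shows "descents n (ascent (swap_pairs a k)) = (\<lambda>j. a + 2 * j) ` {..<k}"
proof -
  have "swap_pairs a k (Suc i) < swap_pairs a k i \<longleftrightarrow> (\<exists>j<k. i = a + 2 * j)" for i
    unfolding swap_pairs_def by (auto simp: le_diff_conv) presburger+
  then show ?thesis
    using assms unfolding descents_def not_ascent_iff[OF swap_pairs_permutes[OF assms]] by auto
qed

lemma Suc_notin_progression_step_2:
  assumes "i \<in> (\<lambda>j. a + 2 * j) ` {..<k}"
  shows "Suc i \<notin> (\<lambda>j. a + 2 * j) ` {..<k}"
  using assms by auto presburger

lemma ascent_swap_pairs_0: "1 \<le> a \<Longrightarrow> ascent (swap_pairs a k) 0"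
  by (simp add: ascent_def swap_pairs_def)

lemma left_peaks_swap_pairs:
  assumes "1 \<le> a" "a + 2 * k \<le> Suc n"
  shows "left_peaks n (ascent (swap_pairs a k)) = (\<lambda>j. a + 2 * j) ` {..<k}"
  using left_peaks_eq_descents[where u = "ascent (swap_pairs a k)" and n = n,
      OF ascent_swap_pairs_0[OF assms(1)]] Suc_notin_progression_step_2
  unfolding descents_swap_pairs[OF assms] by blast

lemma card_progression_step_2: "card ((\<lambda>j. a + 2 * j) ` {..<k}) = k"
  by (simp add: card_image inj_on_def)

lemma exists_permutes_lpk:
  assumes "2 * k \<le> n"
  shows "\<exists>\<pi>. \<pi> permutes {1..n} \<and> lpk n \<pi> = k"
proof -
  have "1 \<le> (1::nat)" "1 + 2 * k \<le> Suc n"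
    using assms by simp_all
  note perm = swap_pairs_permutes[OF this]
  have "lpk n (swap_pairs 1 k) = k"
    unfolding lpk_eq_card_left_peaks[OF perm] left_peaks_swap_pairs[OF \<open>1 \<le> 1\<close> \<open>1 + 2 * k \<le> Suc n\<close>]
    by (rule card_progression_step_2)
  then show ?thesis
    using perm by blast
qed

lemma exists_permutes_pk:
  assumes "2 * k + 1 \<le> n"
  shows "\<exists>\<pi>. \<pi> permutes {1..n} \<and> pk n \<pi> = k"
proof -
  have "1 \<le> (2::nat)" "2 + 2 * k \<le> Suc n"
    using assms by simp_all
  note perm = swap_pairs_permutes[OF this]
  have "peaks n (ascent (swap_pairs 2 k)) = (\<lambda>j. 2 + 2 * j) ` {..<k}"
    unfolding peaks_eq_left_peaks_minus_1 left_peaks_swap_pairs[OF \<open>1 \<le> 2\<close> \<open>2 + 2 * k \<le> Suc n\<close>]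
    by auto
  then have "pk n (swap_pairs 2 k) = k"
    unfolding pk_eq_card_peaks[OF perm] by (simp only: card_progression_step_2)
  then show ?thesis
    using perm by blast
qed

definition reverse_prefix :: "nat \<Rightarrow> nat \<Rightarrow> nat" where
  "reverse_prefix k i = (if 1 \<le> i \<and> i \<le> k + 1 then k + 2 - i else i)"

lemma exists_permutes_des:
  assumes "k + 1 \<le> n"
  shows "\<exists>\<pi>. \<pi> permutes {1..n} \<and> des n \<pi> = k"
proof -
  have perm: "reverse_prefix k permutes {1..n}"
    by (rule involution_permutes) (use assms in \<open>auto simp: reverse_prefix_def\<close>)
  have "descents n (ascent (reverse_prefix k)) = {1..k}"
    using assms unfolding descents_def not_ascent_iff[OF perm] by (auto simp: reverse_prefix_def)
  then have "des n (reverse_prefix k) = k"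
    by (simp add: des_eq_card_descents[OF perm])
  then show ?thesis
    using perm by blast
qed

lemma lpk_attained_downward:
  assumes "\<exists>\<pi>. \<pi> permutes {1..n} \<and> lpk n \<pi> = k + 1"
  shows "\<exists>\<pi>. \<pi> permutes {1..n} \<and> lpk n \<pi> = k"
proof -
  obtain \<pi> where "\<pi> permutes {1..n}" "lpk n \<pi> = k + 1"
    using assms by blast
  then have "2 * k \<le> n"
    using card_left_peaks_le[of n "ascent \<pi>"] lpk_eq_card_left_peaks by fastforce
  then show ?thesis
    by (rule exists_permutes_lpk)
qed

lemma pk_attained_downward:
  assumes "1 \<le> n" "\<exists>\<pi>. \<pi> permutes {1..n} \<and> pk n \<pi> = k + 1"
  shows "\<exists>\<pi>. \<pi> permutes {1..n} \<and> pk n \<pi> = k"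
proof -
  obtain \<pi> where "\<pi> permutes {1..n}" "pk n \<pi> = k + 1"
    using assms(2) by blast
  then have "2 * k + 1 \<le> n"
    using card_peaks_le[OF assms(1), of "ascent \<pi>"] pk_eq_card_peaks by fastforce
  then show ?thesis
    by (rule exists_permutes_pk)
qed

lemma des_attained_downward:
  assumes "1 \<le> n" "\<exists>\<pi>. \<pi> permutes {1..n} \<and> des n \<pi> = k + 1"
  shows "\<exists>\<pi>. \<pi> permutes {1..n} \<and> des n \<pi> = k"
proof -
  obtain \<pi> where "\<pi> permutes {1..n}" "des n \<pi> = k + 1"
    using assms(2) by blast
  then have "k + 1 \<le> n"
    using card_descents_le[OF assms(1), of "ascent \<pi>"] des_eq_card_descents by fastforce
  then show ?thesis
    by (rule exists_permutes_des)
qed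

theorem lemma3p5:
  fixes n m k :: nat
  assumes "n \<ge> 1"
  shows "Omega n k m \<ge> Omega n (k + 1) m \<and>
         Omega_star n k m \<ge> Omega_star n (k + 1) m \<and>
         Omega_plus n k m \<ge> Omega_plus n (k + 1) m"
proof (intro conjI)
  show "Omega n (k + 1) m \<le> Omega n k m"
    unfolding Omega_def
    by (rule count_at_SOME_antimono) (use Omega_pi_antimono[OF assms] lpk_attained_downward in blast)+
  show "Omega_star n (k + 1) m \<le> Omega_star n k m"
    unfolding Omega_star_def
    by (rule count_at_SOME_antimono) (use Omega_star_pi_antimono[OF assms] pk_attained_downward[OF assms] in blast)+
  show "Omega_plus n (k + 1) m \<le> Omega_plus n k m"
    unfolding Omega_plus_def
    by (rule count_at_SOME_antimono) (use Omega_plus_pi_antimono[OF assms] des_attained_downward[OF assms] in blast)+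
qed

end
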